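(* Let $x>1/2$ and define $\rho_x(G)=\max(\rho(G),x)$ for graphs $G$. Then for all edge-neighboring graphs $G,G'$, $|\rho_x(G)-\rho_x(G')|\le\frac{1}{2x-1}$.
   Context: Graphs are simple undirected with vertex set $V$. For nonempty $S\subseteq V$, $\rho(S)=|E(S)|/|S|$ where $E(S)$ is the set of edges with both endpoints in $S$, and $\rho(G)=\max_{\emptyset\ne S\subseteq V}\rho(S)$. Two graphs are edge-neighboring if they have the same vertex set and their edge sets differ in exactly one edge. *)

theory Defs
  imports Complex_Main
begin

definition simple_graph :: "'a set \<Rightarrow> 'a set set \<Rightarrow> bool" where
  "simple_graph V E \<longleftrightarrow> finite V \<and> (\<forall>e\<in>E. e \<subseteq> V \<and> card e = 2)"

definition induced_edges :: "'a set set \<Rightarrow> 'a set \<Rightarrow> 'a set set" where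
  "induced_edges E S = {e \<in> E. e \<subseteq> S}"

definition density :: "'a set set \<Rightarrow> 'a set \<Rightarrow> real" where
  "density E S = real (card (induced_edges E S)) / real (card S)"

definition max_density :: "'a set \<Rightarrow> 'a set set \<Rightarrow> real" where
  "max_density V E = Max {density E S | S. S \<subseteq> V \<and> S \<noteq> {}}"

definition clipped_density :: "real \<Rightarrow> 'a set \<Rightarrow> 'a set set \<Rightarrow> real" where
  "clipped_density x V E = max (max_density V E) x"

definition edge_neighboring :: "'a set set \<Rightarrow> 'a set set \<Rightarrow> bool" where
  "edge_neighboring E E' \<longleftrightarrow> card ((E - E') \<union> (E' - E)) = 1"

end

theory Submission
  imports Defs
begin

text \<open>Adding an edge raises the density of a vertex set S by at most 1/|S|. If the new maximum
  density exceeds x, it is attained on a set S with |S| > 2x + 1, because a simple graph on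
  S has density at most (|S| - 1)/2; hence the clipped density grows by less than 1/(2x - 1).
  Removing an edge cannot raise it, which gives the bound in both directions.\<close>

lemma finite_induced_edges: "finite S \<Longrightarrow> finite (induced_edges E S)"
  unfolding induced_edges_def by (rule finite_subset[of _ "Pow S"]) auto

lemma induced_edges_mono: "E \<subseteq> E' \<Longrightarrow> induced_edges E S \<subseteq> induced_edges E' S"
  unfolding induced_edges_def by auto

lemma card_induced_edges_le_choose_two:
  assumes "finite S" and "\<forall>e\<in>E. card e = 2"
  shows "card (induced_edges E S) \<le> card S choose 2"
proof -
  have "card (induced_edges E S) \<le> card {B. B \<subseteq> S \<and> card B = 2}"
    using assms by (intro card_mono) (auto simp: induced_edges_def)
  also have "\<dots> = card S choose 2"
    using n_subsets[OF assms(1)] by simp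
  finally show ?thesis .
qed

lemma two_times_choose_two: "2 * (n choose 2) = n * (n - 1)"
  by (induction n) (auto simp: choose_two algebra_simps)

lemma twice_density_le_card_minus_one:
  assumes "finite S" "S \<noteq> {}" and "\<forall>e\<in>E. card e = 2"
  shows "2 * density E S \<le> real (card S) - 1"
proof -
  have k: "card S > 0" using assms by (simp add: card_gt_0_iff)
  have "real (card (induced_edges E S)) \<le> real (card S choose 2)"
    using card_induced_edges_le_choose_two[OF assms(1,3)] by linarith
  also have "\<dots> = real (card S) * (real (card S) - 1) / 2"
    using arg_cong[OF two_times_choose_two[of "card S"], of real] k by (simp add: of_nat_diff)
  finally show ?thesis
    using k unfolding density_def by (simp add: field_simps)
qed

lemma density_mono:
  assumes "finite S" "E \<subseteq> E'"
  shows "density E S \<le> density E' S"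
  unfolding density_def
  using card_mono[OF finite_induced_edges[OF assms(1)] induced_edges_mono[OF assms(2)]]
  by (simp add: divide_right_mono)

lemma density_insert_le:
  assumes "finite S"
  shows "density (insert e E) S \<le> density E S + 1 / real (card S)"
proof -
  have "induced_edges (insert e E) S \<subseteq> insert e (induced_edges E S)"
    unfolding induced_edges_def by auto
  hence "card (induced_edges (insert e E) S) \<le> card (insert e (induced_edges E S))"
    using finite_induced_edges[OF assms] by (intro card_mono) auto
  also have "\<dots> \<le> card (induced_edges E S) + 1"
    by (simp add: card_insert_le_m1 card_insert_if finite_induced_edges[OF assms])
  finally have "card (induced_edges (insert e E) S) \<le> card (induced_edges E S) + 1" .
  thus ?thesis
    unfolding density_def by (simp add: add_divide_distrib[symmetric] divide_right_mono)
qed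

lemma finite_densities:
  "finite V \<Longrightarrow> finite {density E S | S. S \<subseteq> V \<and> S \<noteq> {}}"
  using finite_image_set[of "\<lambda>S. S \<subseteq> V \<and> S \<noteq> {}" "density E"] by simp

lemma density_le_max_density:
  assumes "finite V" "S \<subseteq> V" "S \<noteq> {}"
  shows "density E S \<le> max_density V E"
  unfolding max_density_def using finite_densities[OF assms(1)] assms by (intro Max_ge) auto

lemma max_density_attained:
  assumes "finite V" "V \<noteq> {}"
  obtains S where "S \<subseteq> V" "S \<noteq> {}" "max_density V E = density E S"
proof -
  have "max_density V E \<in> {density E S | S. S \<subseteq> V \<and> S \<noteq> {}}"
    unfolding max_density_def using finite_densities[OF assms(1)] assms by (intro Max_in) auto
  thus ?thesis using that by blast
qed

lemma max_density_mono:
  assumes "finite V" "V \<noteq> {}" "E \<subseteq> E'"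
  shows "max_density V E \<le> max_density V E'"
proof -
  obtain S where S: "S \<subseteq> V" "S \<noteq> {}" "max_density V E = density E S"
    using max_density_attained[OF assms(1,2)] .
  have "density E S \<le> density E' S"
    using density_mono[OF finite_subset[OF S(1) assms(1)] assms(3)] .
  also have "\<dots> \<le> max_density V E'"
    using density_le_max_density[OF assms(1) S(1,2)] .
  finally show ?thesis using S(3) by simp
qed

lemma clipped_density_mono:
  "finite V \<Longrightarrow> V \<noteq> {} \<Longrightarrow> E \<subseteq> E' \<Longrightarrow> clipped_density x V E \<le> clipped_density x V E'"
  unfolding clipped_density_def using max_density_mono by (metis max.mono order_refl)

lemma max_le_max_add:
  fixes a b c x :: real
  shows "0 \<le> c \<Longrightarrow> a \<le> b + c \<Longrightarrow> max a x \<le> max b x + c"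
  by (simp add: max_def)

lemma clipped_density_insert_le:
  fixes x :: real
  assumes x: "x > 1/2" and V: "V \<noteq> {}" and G: "simple_graph V (insert e E)"
  shows "clipped_density x V (insert e E) \<le> clipped_density x V E + 1 / (2 * x - 1)"
proof -
  have fV: "finite V" and edges: "\<forall>d\<in>insert e E. card d = 2"
    using G unfolding simple_graph_def by auto
  have bound_pos: "1 / (2 * x - 1) > 0" using x by simp
  obtain S where S: "S \<subseteq> V" "S \<noteq> {}" "max_density V (insert e E) = density (insert e E) S"
    using max_density_attained[OF fV V] .
  have fS: "finite S" using finite_subset[OF S(1) fV] .
  show ?thesis
  proof (cases "density (insert e E) S \<le> x")
    case True
    hence "clipped_density x V (insert e E) = x"
      using S(3) unfolding clipped_density_def by simp
    moreover have "x \<le> clipped_density x V E"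
      unfolding clipped_density_def by simp
    ultimately show ?thesis using bound_pos by linarith
  next
    case False
    with twice_density_le_card_minus_one[OF fS S(2) edges]
    have "real (card S) > 2 * x - 1" by linarith
    hence "1 / real (card S) \<le> 1 / (2 * x - 1)"
      using x by (intro divide_left_mono mult_pos_pos) linarith+
    have "max_density V (insert e E) \<le> density E S + 1 / real (card S)"
      using S(3) density_insert_le[OF fS] by simp
    also have "\<dots> \<le> max_density V E + 1 / (2 * x - 1)"
      using density_le_max_density[OF fV S(1,2)] \<open>1 / real (card S) \<le> 1 / (2 * x - 1)\<close>
      by (rule add_mono)
    finally have "max_density V (insert e E) \<le> max_density V E + 1 / (2 * x - 1)" .
    thus ?thesis
      unfolding clipped_density_def by (rule max_le_max_add[OF less_imp_le[OF bound_pos]])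
  qed
qed

lemma abs_clipped_density_insert_le:
  fixes x :: real
  assumes "x > 1/2" "V \<noteq> {}" "simple_graph V (insert e E)"
  shows "\<bar>clipped_density x V E - clipped_density x V (insert e E)\<bar> \<le> 1 / (2 * x - 1)"
proof -
  have "finite V" using assms(3) unfolding simple_graph_def by simp
  hence "clipped_density x V E \<le> clipped_density x V (insert e E)"
    using clipped_density_mono[OF _ assms(2) subset_insertI] by blast
  thus ?thesis using clipped_density_insert_le[OF assms] by (intro abs_leI) linarith+
qed

lemma edge_neighboring_cases:
  assumes "edge_neighboring E E'"
  obtains e where "E' = insert e E" | e where "E = insert e E'"
proof -
  obtain e where "(E - E') \<union> (E' - E) = {e}"
    using assms unfolding edge_neighboring_def by (rule card_1_singletonE)
  hence sub: "E - E' \<subseteq> {e}" "E' - E \<subseteq> {e}" and e_cases: "e \<in> E - E' \<or> e \<in> E' - E"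
    by auto
  from e_cases show ?thesis
  proof
    assume "e \<in> E - E'"
    with sub have "E = insert e E'" by blast
    thus ?thesis by (rule that(2))
  next
    assume "e \<in> E' - E"
    with sub have "E' = insert e E" by blast
    thus ?thesis by (rule that(1))
  qed
qed

theorem mainTheorem13:
  fixes x :: real and V :: "'a set" and E E' :: "'a set set"
  assumes "x > 1/2"
    and "V \<noteq> {}"
    and "simple_graph V E" and "simple_graph V E'"
    and "edge_neighboring E E'"
  shows "\<bar>clipped_density x V E - clipped_density x V E'\<bar> \<le> 1 / (2 * x - 1)"
  using assms(5)
proof (cases rule: edge_neighboring_cases)
  case 1
  thus ?thesis using abs_clipped_density_insert_le[OF assms(1,2)] assms(4) by simp
next
  case 2
  thus ?thesis using abs_clipped_density_insert_le[OF assms(1,2)] assms(3)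
    by (simp add: abs_minus_commute)
qed

end
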